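(* Every $5$-dimensional Acaa-algebra over a field $\mathbb K$ of characteristic $0$ is isomorphic to one of the following algebras, each given in a basis $\{e_1,\dots,e_5\}$ with all brackets of basis vectors not listed (and not determined by anticommutativity) equal to zero: (1) the $5$-dimensional abelian algebra; (2) $\mathcal H_3\oplus\mathbb K^2$: $[e_1,e_2]=e_3$; (3) the $2$-step nilpotent Lie algebra $[e_1,e_2]=e_3$, $[e_1,e_4]=e_5$; (4) the $5$-dimensional Heisenberg Lie algebra $\mathcal H_5$: $[e_1,e_2]=e_5$, $[e_3,e_4]=e_5$.
   Context: An Acaa-algebra over a field $\mathbb K$ of characteristic $0$ is a $\mathbb K$-vector space $A$ with a bilinear product $[\cdot,\cdot]$ which is anticommutative, $[x,y]=-[y,x]$, and satisfies $[x_1,[x_2,x_3]]=[x_2,[x_3,x_1]]$ for all $x_1,x_2,x_3\in A$. Isomorphism means a linear bijection preserving the bracket. *)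

theory Defs
  imports Complex_Main "HOL-Library.Function_Algebras"
begin

definition acaa_algebra ::
  "('k::field \<Rightarrow> 'v::ab_group_add \<Rightarrow> 'v) \<Rightarrow> ('v \<Rightarrow> 'v \<Rightarrow> 'v) \<Rightarrow> bool" where
  "acaa_algebra sc br \<longleftrightarrow>
     vector_space sc \<and>
     (\<forall>x. Vector_Spaces.linear sc sc (br x)) \<and>
     (\<forall>y. Vector_Spaces.linear sc sc (\<lambda>x. br x y)) \<and>
     (\<forall>x y. br x y = - br y x) \<and>
     (\<forall>x1 x2 x3. br x1 (br x2 x3) = br x2 (br x3 x1))"

definition alg_isomorphic ::
  "('k::field \<Rightarrow> 'v::ab_group_add \<Rightarrow> 'v) \<Rightarrow> ('v \<Rightarrow> 'v \<Rightarrow> 'v) \<Rightarrow>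
   ('k \<Rightarrow> 'w::ab_group_add \<Rightarrow> 'w) \<Rightarrow> ('w \<Rightarrow> 'w \<Rightarrow> 'w) \<Rightarrow> bool" where
  "alg_isomorphic sc1 br1 sc2 br2 \<longleftrightarrow>
     (\<exists>f. Vector_Spaces.linear sc1 sc2 f \<and> bij f \<and>
          (\<forall>x y. f (br1 x y) = br2 (f x) (f y)))"

text \<open>Model algebras on K^5 = (idx5 \<Rightarrow> 'k) with standard basis e_1..e_5
(e_i = indicator of Ei); the brackets are the bilinear extensions of the
listed brackets of basis vectors.\<close>

datatype idx5 = E1 | E2 | E3 | E4 | E5

definition sc5 :: "'k::field \<Rightarrow> (idx5 \<Rightarrow> 'k) \<Rightarrow> (idx5 \<Rightarrow> 'k)" where
  "sc5 c x = (\<lambda>i. c * x i)"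

definition br_abelian :: "(idx5 \<Rightarrow> 'k::field) \<Rightarrow> (idx5 \<Rightarrow> 'k) \<Rightarrow> (idx5 \<Rightarrow> 'k)" where
  "br_abelian x y = (\<lambda>k. 0)"

definition br_H3K2 :: "(idx5 \<Rightarrow> 'k::field) \<Rightarrow> (idx5 \<Rightarrow> 'k) \<Rightarrow> (idx5 \<Rightarrow> 'k)" where
  "br_H3K2 x y = (\<lambda>k. if k = E3 then x E1 * y E2 - x E2 * y E1 else 0)"

definition br_L52 :: "(idx5 \<Rightarrow> 'k::field) \<Rightarrow> (idx5 \<Rightarrow> 'k) \<Rightarrow> (idx5 \<Rightarrow> 'k)" where
  "br_L52 x y = (\<lambda>k. if k = E3 then x E1 * y E2 - x E2 * y E1
                     else if k = E5 then x E1 * y E4 - x E4 * y E1 else 0)"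

definition br_H5 :: "(idx5 \<Rightarrow> 'k::field) \<Rightarrow> (idx5 \<Rightarrow> 'k) \<Rightarrow> (idx5 \<Rightarrow> 'k)" where
  "br_H5 x y = (\<lambda>k. if k = E5 then x E1 * y E2 - x E2 * y E1 + x E3 * y E4 - x E4 * y E3
                     else 0)"

end

theory Submission
  imports Defs "HOL-Library.Indicator_Function"
begin

text \<open>
  In an Acaa-algebra over a field of characteristic 0 one has [x,x] = 0, [x,[x,z]] = 0 and
  [[a,b],[c,d]] = 0, so all products of four elements vanish. In dimension 5 even
  [x,[y,z]] = 0, since otherwise x, y, z, [y,z], [z,x], [x,[y,z]] would be six independent
  vectors. So the algebra is a 2-step nilpotent Lie algebra, classified by its derived algebra:
  if it is 0 the algebra is abelian; if it is a line spanned by z = [x1,x2], complete x1, x2, z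
  by two vectors w1, w2 commuting with x1, x2, and [w1,w2] = c z gives H3 + K^2 (c = 0) or
  H5 (c \<noteq> 0); if it has dimension at least 2, some ad a has rank 2, which forces the
  algebra [e1,e2] = e3, [e1,e4] = e5.
\<close>

context vector_space
begin

definition independent_list :: "'b list \<Rightarrow> bool" where
  "independent_list vs \<longleftrightarrow> distinct vs \<and> independent (set vs)"

definition lin_comb :: "'a list \<Rightarrow> 'b list \<Rightarrow> 'b" where
  "lin_comb cs vs = (\<Sum>(c, v)\<leftarrow>zip cs vs. c *s v)"

end

text \<open>Without hiding them, the copies produced by the global interpretation \<open>real_vector\<close>
  would capture the unqualified names inside \<open>vector_space\<close>.\<close>

hide_const (open) real_vector.independent_list real_vector.lin_comb

context vector_space
begin

lemma lin_comb_Cons [simp]: "lin_comb (c # cs) (v # vs) = c *s v + lin_comb cs vs"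
  by (simp add: lin_comb_def)

lemma lin_comb_Nil [simp]: "lin_comb [] vs = 0" "lin_comb cs [] = 0"
  by (simp_all add: lin_comb_def)

lemma span_set_eq_lin_combs: "span (set vs) = {lin_comb cs vs |cs. length cs = length vs}"
proof (induction vs)
  case Nil
  show ?case by simp
next
  case (Cons v vs)
  show ?case
  proof (intro set_eqI iffI)
    fix x assume "x \<in> span (set (v # vs))"
    then obtain k cs where "length cs = length vs" "x - k *s v = lin_comb cs vs"
      by (auto simp: span_insert Cons.IH)
    then show "x \<in> {lin_comb cs (v # vs) |cs. length cs = length (v # vs)}"
      by (auto intro!: exI[of _ "k # cs"] simp: algebra_simps)
  next
    fix x assume "x \<in> {lin_comb cs (v # vs) |cs. length cs = length (v # vs)}"
    then obtain k cs where "length cs = length vs" "x = k *s v + lin_comb cs vs"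
      by (fastforce simp: length_Suc_conv)
    then have "length cs = length vs" "x - k *s v = lin_comb cs vs"
      by simp_all
    then show "x \<in> span (set (v # vs))"
      unfolding set_simps span_insert Cons.IH by blast
  qed
qed

lemma independent_list_Nil [simp]: "independent_list []"
  by (simp add: independent_list_def independent_empty)

lemma independent_list_Cons:
  "independent_list (v # vs) \<longleftrightarrow> v \<notin> span (set vs) \<and> independent_list vs"
  by (auto simp: independent_list_def independent_insert span_base)

lemma independent_listD:
  assumes "independent_list vs" "length cs = length vs" "lin_comb cs vs = 0" "c \<in> set cs"
  shows "c = 0"
  using assms
proof (induction vs arbitrary: cs)
  case Nil
  then show ?case by simp
next
  case (Cons v vs)
  then obtain d ds where cs: "cs = d # ds" "length ds = length vs"
    by (auto simp: length_Suc_conv)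
  have sum: "d *s v + lin_comb ds vs = 0"
    using Cons.prems(3) by (simp add: cs)
  have "d = 0"
  proof (rule ccontr)
    assume "d \<noteq> 0"
    have "d *s v = - lin_comb ds vs"
      using sum by (simp add: eq_neg_iff_add_eq_0)
    also have "\<dots> \<in> span (set vs)"
      using cs(2) by (intro span_neg) (auto simp: span_set_eq_lin_combs)
    finally have "(1 / d) *s (d *s v) \<in> span (set vs)"
      by (rule span_scale)
    with \<open>d \<noteq> 0\<close> show False
      using Cons.prems(1) by (simp add: independent_list_Cons)
  qed
  then show ?case
    using Cons sum cs(2) by (auto simp: cs(1) independent_list_Cons)
qed

lemma independent_list_Cons_scale:
  assumes "independent_list (v # vs)" "c \<noteq> 0"
  shows "independent_list (c *s v # vs)"
proof -
  have "v \<notin> span (set vs)"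
    using assms(1) by (simp add: independent_list_Cons)
  then have "c *s v \<notin> span (set vs)"
    using span_scale[of "c *s v" "set vs" "1 / c"] assms(2) by auto
  then show ?thesis
    using assms(1) by (simp add: independent_list_Cons)
qed

lemma independent_list_reorder:
  assumes "independent_list vs" "set ws = set vs" "length ws = length vs"
  shows "independent_list ws"
  using assms by (metis independent_list_def card_distinct distinct_card)

lemma independent_list_ConsI:
  assumes "independent_list vs" "Vector_Spaces.linear scale scale \<phi>"
    and "\<phi> v \<notin> span (\<phi> ` set vs)"
  shows "independent_list (v # vs)"
proof -
  have "v \<notin> span (set vs)"
  proof
    assume "v \<in> span (set vs)"
    then have "\<phi> v \<in> \<phi> ` span (set vs)" by blast
    also have "\<dots> = span (\<phi> ` set vs)"
      using assms(2) module_hom.span_image[of scale scale \<phi>] by (simp add: module_hom_iff_linear)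
    finally show False
      using assms(3) by blast
  qed
  then show ?thesis
    using assms(1) by (simp add: independent_list_Cons)
qed

lemma span_singletons_inter:
  assumes "v \<notin> span {w}" "x \<in> span {v}" "x \<in> span {w}"
  shows "x = 0"
proof -
  obtain r where "x = r *s v"
    using assms(2) by (auto simp: span_singleton)
  show ?thesis
  proof (cases "r = 0")
    case False
    then have "v = (1 / r) *s x"
      using \<open>x = r *s v\<close> by simp
    then have "v \<in> span {w}"
      using span_scale[OF assms(3)] by simp
    with assms(1) show ?thesis
      by blast
  qed (use \<open>x = r *s v\<close> in simp)
qed

end

lemma vector_space_sc5: "vector_space (sc5 :: 'k::field \<Rightarrow> _)"
  unfolding vector_space_def sc5_def by (auto simp: fun_eq_iff algebra_simps)

lemma UNIV_idx5: "UNIV = set [E1, E2, E3, E4, E5]"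
  using idx5.exhaust by auto

lemma sum_UNIV_idx5: "(\<Sum>k\<in>UNIV. h k) = h E1 + h E2 + h E3 + h E4 + h E5"
  by (simp add: UNIV_idx5 add.assoc)

context finite_dimensional_vector_space
begin

lemma independent_list_length_le_dim: "independent_list vs \<Longrightarrow> length vs \<le> dim UNIV"
  unfolding independent_list_def
  by (metis distinct_card independent_card_le_dim subset_UNIV)

lemma independent_list_spans:
  assumes "independent_list vs" "length vs = dim UNIV"
  shows "\<exists>cs. length cs = length vs \<and> v = lin_comb cs vs"
proof -
  have "UNIV \<subseteq> span (set vs)"
    using assms unfolding independent_list_def
    by (intro card_ge_dim_independent) (auto simp: distinct_card)
  then show ?thesis
    by (auto simp: span_set_eq_lin_combs)
qed

lemma linear_bij_idx5_coordinates:
  assumes basis: "independent_list (map f [E1, E2, E3, E4, E5])" and "dim UNIV = 5"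
  shows "Vector_Spaces.linear sc5 scale (\<lambda>c. \<Sum>k\<in>UNIV. c k *s f k)"
    and "bij (\<lambda>c. \<Sum>k\<in>UNIV. c k *s f k)"
proof -
  define g where "g c = (\<Sum>k\<in>UNIV. c k *s f k)" for c :: "idx5 \<Rightarrow> 'a"
  have g_lin_comb: "g c = lin_comb (map c [E1, E2, E3, E4, E5]) (map f [E1, E2, E3, E4, E5])" for c
    by (simp add: g_def sum_UNIV_idx5 add.assoc)
  show "Vector_Spaces.linear sc5 scale g"
    unfolding Vector_Spaces.linear_iff
    by (auto simp: vector_space_sc5 vector_space_axioms g_def sc5_def
        scale_left_distrib sum.distrib scale_sum_right)
  have "inj g"
  proof (rule injI)
    fix x y assume "g x = g y"
    then have "g (x - y) = 0"
      by (simp add: g_def scale_left_diff_distrib sum_subtractf)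
    then have coordinates:
      "lin_comb (map (x - y) [E1, E2, E3, E4, E5]) (map f [E1, E2, E3, E4, E5]) = 0"
      by (simp only: g_lin_comb)
    have "(x - y) k = 0" for k
      by (rule independent_listD[OF basis _ coordinates]) (cases k; simp)+
    then show "x = y"
      by (simp add: fun_eq_iff)
  qed
  moreover have "surj g"
    unfolding surj_def
  proof
    fix w
    have "length (map f [E1, E2, E3, E4, E5]) = dim UNIV"
      using \<open>dim UNIV = 5\<close> by simp
    then obtain cs where "length cs = length (map f [E1, E2, E3, E4, E5])"
        "w = lin_comb cs (map f [E1, E2, E3, E4, E5])"
      using independent_list_spans[OF basis] by blast
    then obtain a b c d e where "w = lin_comb [a, b, c, d, e] (map f [E1, E2, E3, E4, E5])"
      by (auto simp: length_Suc_conv)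
    then have "w = g (case_idx5 a b c d e)"
      by (simp add: g_lin_comb)
    then show "\<exists>c. w = g c"
      by blast
  qed
  ultimately show "bij g"
    by (simp add: bij_def)
qed

lemma independent_list_extend_within:
  assumes "independent_list vs" "\<And>v. \<exists>s\<in>S. v - s \<in> span (set vs)"
  shows "\<exists>ws. set ws \<subseteq> S \<and> length ws + length vs = dim UNIV \<and> independent_list (ws @ vs)"
  using assms
proof (induction "dim UNIV - length vs" arbitrary: vs)
  case 0
  then show ?case
    using independent_list_length_le_dim[of vs] by (auto intro!: exI[of _ "[]"])
next
  case (Suc n)
  obtain w where "w \<in> S" "w \<notin> span (set vs)"
  proof (rule ccontr)
    assume "\<not> thesis"
    then have "S \<subseteq> span (set vs)"
      using that by blast
    have "v \<in> span (set vs)" for v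
    proof -
      obtain s where "s \<in> S" "v - s \<in> span (set vs)"
        using Suc.prems(2) by blast
      then show ?thesis
        using \<open>S \<subseteq> span (set vs)\<close> span_add[of s "set vs" "v - s"] by auto
    qed
    then have "dim (UNIV :: 'b set) \<le> card (set vs)"
      by (intro dim_le_card) auto
    also have "\<dots> \<le> length vs"
      by (rule card_length)
    finally show False
      using Suc.hyps(2) by linarith
  qed
  have "independent_list (w # vs)"
    using \<open>w \<notin> span (set vs)\<close> Suc.prems(1) by (simp add: independent_list_Cons)
  moreover have "\<exists>s\<in>S. v - s \<in> span (set (w # vs))" for v
    using Suc.prems(2)[of v] span_mono[of "set vs" "set (w # vs)"] by auto
  moreover have "n = dim UNIV - length (w # vs)"
    using Suc.hyps(2) by simp
  ultimately obtain ws where "set ws \<subseteq> S" "length ws + length (w # vs) = dim UNIV"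
      "independent_list (ws @ w # vs)"
    using Suc.hyps(1) by blast
  then show ?case
    using \<open>w \<in> S\<close> by (intro exI[of _ "ws @ [w]"]) auto
qed

end

lemma alg_isomorphic_sym:
  assumes "alg_isomorphic s1 br1 s2 br2"
  shows "alg_isomorphic s2 br2 s1 br1"
proof -
  obtain f where lin: "Vector_Spaces.linear s1 s2 f" and "bij f"
    and hom: "\<And>x y. f (br1 x y) = br2 (f x) (f y)"
    using assms unfolding alg_isomorphic_def by blast
  have f_inv: "f (inv f y) = y" for y
    using \<open>bij f\<close> by (simp add: bij_is_surj surj_f_inv_f)
  have inv_f: "inv f (f x) = x" for x
    using \<open>bij f\<close> by (simp add: bij_is_inj)
  have "Vector_Spaces.linear s2 s1 (inv f)"
    using lin unfolding Vector_Spaces.linear_iff by (metis f_inv inv_f)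
  moreover have "inv f (br2 x y) = br1 (inv f x) (inv f y)" for x y
    by (metis hom f_inv inv_f)
  ultimately show ?thesis
    unfolding alg_isomorphic_def using bij_imp_bij_inv[OF \<open>bij f\<close>] by blast
qed

lemma model_bracket_structure_constants:
  fixes x y :: "idx5 \<Rightarrow> 'k::field"
  shows "br_abelian x y k =
      (\<Sum>i\<in>UNIV. \<Sum>j\<in>UNIV. x i * y j * br_abelian (indicator {i}) (indicator {j}) k)"
    and "br_H3K2 x y k = (\<Sum>i\<in>UNIV. \<Sum>j\<in>UNIV. x i * y j * br_H3K2 (indicator {i}) (indicator {j}) k)"
    and "br_L52 x y k = (\<Sum>i\<in>UNIV. \<Sum>j\<in>UNIV. x i * y j * br_L52 (indicator {i}) (indicator {j}) k)"
    and "br_H5 x y k = (\<Sum>i\<in>UNIV. \<Sum>j\<in>UNIV. x i * y j * br_H5 (indicator {i}) (indicator {j}) k)"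
  by (cases k; simp add: sum_UNIV_idx5 br_abelian_def br_H3K2_def br_L52_def br_H5_def
      indicator_def algebra_simps)+

locale acaa = vector_space scale
  for scale :: "'k::field_char_0 \<Rightarrow> 'v::ab_group_add \<Rightarrow> 'v" (infixr \<open>*s\<close> 75) +
  fixes br :: "'v \<Rightarrow> 'v \<Rightarrow> 'v"
  assumes linear_bracket: "Vector_Spaces.linear scale scale (br x)"
    and bracket_anticomm: "br x y = - br y x"
    and bracket_cyclic: "br x (br y z) = br y (br z x)"
begin

lemma bracket_add_right: "br x (y + z) = br x y + br x z"
  using linear_bracket by (simp add: Vector_Spaces.linear_iff)

lemma bracket_scale_right: "br x (c *s y) = c *s br x y"
  using linear_bracket by (simp add: Vector_Spaces.linear_iff)

lemma bracket_add_left: "br (x + y) z = br x z + br y z"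
  using bracket_add_right[of z x y] by (simp add: bracket_anticomm[of _ z])

lemma bracket_scale_left: "br (c *s x) y = c *s br x y"
  using bracket_scale_right[of y c x] by (simp add: bracket_anticomm[of _ y])

lemma linear_bracket_left: "Vector_Spaces.linear scale scale (\<lambda>x. br x y)"
  unfolding Vector_Spaces.linear_iff
  using vector_space_axioms bracket_add_left bracket_scale_left by blast

lemma bracket_zero_right [simp]: "br x 0 = 0"
  using bracket_scale_right[of x 0 0] by simp

lemma bracket_zero_left [simp]: "br 0 x = 0"
  using bracket_scale_left[of 0 0 x] by simp

lemma bracket_minus_right: "br x (- y) = - br x y"
  using bracket_scale_right[of x "- 1" y] by simp

lemma bracket_minus_left: "br (- x) y = - br x y"
  using bracket_scale_left[of "- 1" x y] by simp

lemma bracket_diff_right: "br x (y - z) = br x y - br x z"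
  using bracket_add_right[of x y "- z"] by (simp add: bracket_minus_right)

lemma bracket_diff_left: "br (x - y) z = br x z - br y z"
  using bracket_add_left[of x "- y" z] by (simp add: bracket_minus_left)

lemmas bracket_simps = bracket_add_right bracket_add_left bracket_scale_right bracket_scale_left
  bracket_minus_right bracket_minus_left bracket_diff_right bracket_diff_left

lemma bracket_swap: "br x y = v \<Longrightarrow> br y x = - v"
  by (simp add: bracket_anticomm[of y x])

lemma bracket_sum_left: "br (\<Sum>a\<in>A. h a) y = (\<Sum>a\<in>A. br (h a) y)"
  by (induction A rule: infinite_finite_induct) (simp_all add: bracket_add_left)

lemma bracket_sum_right: "br y (\<Sum>a\<in>A. h a) = (\<Sum>a\<in>A. br y (h a))"
  by (induction A rule: infinite_finite_induct) (simp_all add: bracket_add_right)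

text \<open>The only place where the characteristic of the field matters.\<close>

lemma eq_neg_self_imp_zero:
  fixes x :: 'v
  assumes "x = - x"
  shows "x = 0"
proof -
  have "x + x = 0"
    using assms by (metis add.right_inverse)
  have "x = ((1 / 2 :: 'k) + 1 / 2) *s x"
    by simp
  also have "\<dots> = (1 / 2 :: 'k) *s (x + x)"
    by (simp only: scale_left_distrib scale_right_distrib)
  also have "\<dots> = 0"
    using \<open>x + x = 0\<close> by simp
  finally show ?thesis .
qed

lemma bracket_self [simp]: "br x x = 0"
  using bracket_anticomm eq_neg_self_imp_zero by blast

lemma bracket_self_bracket [simp]: "br x (br x z) = 0"
proof (rule eq_neg_self_imp_zero)
  have "br x (br x z) = br x (br z x)"
    using bracket_cyclic by metis
  also have "\<dots> = - br x (br x z)"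
    by (metis bracket_anticomm bracket_minus_right)
  finally show "br x (br x z) = - br x (br x z)" .
qed

lemma bracket_bracket_self [simp]: "br x (br y x) = 0"
  using bracket_self_bracket[of x y] by (simp add: bracket_anticomm[of y x] bracket_minus_right)

lemma bracket_of_brackets [simp]: "br (br a b) (br c d) = 0"
proof (rule eq_neg_self_imp_zero)
  have cyc2: "br x (br y w) = br w (br x y)" for x y w
    by (metis bracket_cyclic)
  have "br (br c d) (br a b) = - br (br c d) (br b a)"
    by (metis bracket_anticomm bracket_minus_right)
  also have "\<dots> = - br b (br a (br c d))"
    by (metis cyc2)
  also have "\<dots> = - br b (br c (br d a))"
    by (metis bracket_cyclic)
  also have "\<dots> = - br (br d a) (br b c)"
    by (metis cyc2)
  also have "\<dots> = br (br d a) (br c b)"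
    by (metis bracket_anticomm bracket_minus_right minus_minus)
  also have "\<dots> = br c (br b (br d a))"
    by (metis cyc2)
  also have "\<dots> = br c (br d (br a b))"
    by (metis bracket_cyclic)
  also have "\<dots> = br (br a b) (br c d)"
    by (metis cyc2)
  also have "\<dots> = - br (br c d) (br a b)"
    by (rule bracket_anticomm)
  finally have "br (br c d) (br a b) = - br (br c d) (br a b)" .
  then show "br (br a b) (br c d) = - br (br a b) (br c d)"
    by (metis bracket_anticomm minus_minus)
qed

lemma bracket_bracket_bracket [simp]: "br x (br y (br z w)) = 0"
proof -
  have "br x (br y (br z w)) = br y (br (br z w) x)"
    by (rule bracket_cyclic)
  also have "\<dots> = br (br z w) (br x y)"
    by (rule bracket_cyclic)
  finally show ?thesis
    by simp
qed

end

lemma acaa_if_acaa_algebra: "acaa_algebra sc br \<Longrightarrow> acaa sc br"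
  unfolding acaa_algebra_def acaa_def acaa_axioms_def by blast

locale acaa5 = acaa scale br + finite_dimensional_vector_space scale Basis
  for scale :: "'k::field_char_0 \<Rightarrow> 'v::ab_group_add \<Rightarrow> 'v" (infixr \<open>*s\<close> 75)
    and br :: "'v \<Rightarrow> 'v \<Rightarrow> 'v"
    and Basis :: "'v set" +
  assumes card_Basis: "card Basis = 5"
begin

lemma independent_list_length_le_5: "independent_list vs \<Longrightarrow> length vs \<le> 5"
  using independent_list_length_le_dim card_Basis by simp

lemma bracket_bracket [simp]: "br x (br y z) = 0"
proof (rule ccontr)
  \<comment> \<open>Each vector of the list is detected by a bracket that kills all later ones.\<close>
  assume "br x (br y z) \<noteq> 0"
  have cyclic: "br y (br z x) = br x (br y z)" "br z (br x y) = br x (br y z)"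
    by (metis bracket_cyclic)+
  have "independent_list [br x (br y z)]"
    using \<open>br x (br y z) \<noteq> 0\<close> by (simp add: independent_list_Cons)
  then have "independent_list [br z x, br x (br y z)]"
    by (rule independent_list_ConsI[OF _ linear_bracket[of y]])
      (use \<open>br x (br y z) \<noteq> 0\<close> cyclic in simp)
  then have "independent_list [br y z, br z x, br x (br y z)]"
    by (rule independent_list_ConsI[OF _ linear_bracket[of x]])
      (use \<open>br x (br y z) \<noteq> 0\<close> in simp)
  then have "independent_list [z, br y z, br z x, br x (br y z)]"
    by (rule independent_list_ConsI[OF _ linear_bracket_left[of "br x y"]])
      (use \<open>br x (br y z) \<noteq> 0\<close> cyclic in simp)
  then have "independent_list [y, z, br y z, br z x, br x (br y z)]"
    by (rule independent_list_ConsI[OF _ linear_bracket_left[of "br z x"]])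
      (use \<open>br x (br y z) \<noteq> 0\<close> cyclic in simp)
  then have "independent_list [x, y, z, br y z, br z x, br x (br y z)]"
    by (rule independent_list_ConsI[OF _ linear_bracket_left[of "br y z"]])
      (use \<open>br x (br y z) \<noteq> 0\<close> in simp)
  then show False
    using independent_list_length_le_5 by fastforce
qed

lemma bracket_bracket_left [simp]: "br (br x y) z = 0"
  using bracket_anticomm[of "br x y" z] by simp

lemma alg_isomorphic_sc5I:
  fixes f :: "idx5 \<Rightarrow> 'v" and brM :: "(idx5 \<Rightarrow> 'k) \<Rightarrow> (idx5 \<Rightarrow> 'k) \<Rightarrow> idx5 \<Rightarrow> 'k"
  assumes basis: "independent_list (map f [E1, E2, E3, E4, E5])"
    and structure_constants:
      "\<And>x y k. brM x y k = (\<Sum>i\<in>UNIV. \<Sum>j\<in>UNIV. x i * y j * brM (indicator {i}) (indicator {j}) k)"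
    and table: "\<And>i j. br (f i) (f j) = (\<Sum>k\<in>UNIV. brM (indicator {i}) (indicator {j}) k *s f k)"
  shows "alg_isomorphic scale br sc5 brM"
proof -
  define g where "g c = (\<Sum>k\<in>UNIV. c k *s f k)" for c :: "idx5 \<Rightarrow> 'k"
  have "Vector_Spaces.linear sc5 scale g" "bij g"
    using linear_bij_idx5_coordinates[OF basis] card_Basis by (simp_all add: g_def[abs_def])
  moreover have "g (brM x y) = br (g x) (g y)" for x y
  proof -
    have "br (g x) (g y) =
        (\<Sum>i\<in>UNIV. \<Sum>j\<in>UNIV. \<Sum>k\<in>UNIV. (x i * y j * brM (indicator {i}) (indicator {j}) k) *s f k)"
      unfolding g_def bracket_sum_left
      unfolding bracket_sum_right bracket_scale_left bracket_scale_right table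
      by (simp add: scale_sum_right mult.assoc mult.left_commute)
    also have "\<dots> =
        (\<Sum>i\<in>UNIV. \<Sum>k\<in>UNIV. \<Sum>j\<in>UNIV. (x i * y j * brM (indicator {i}) (indicator {j}) k) *s f k)"
      by (rule sum.cong[OF refl], rule sum.swap)
    also have "\<dots> =
        (\<Sum>k\<in>UNIV. \<Sum>i\<in>UNIV. \<Sum>j\<in>UNIV. (x i * y j * brM (indicator {i}) (indicator {j}) k) *s f k)"
      by (rule sum.swap)
    also have "\<dots> = g (brM x y)"
      unfolding g_def structure_constants[of x y] by (simp add: scale_sum_left)
    finally show ?thesis ..
  qed
  ultimately have "alg_isomorphic sc5 brM scale br"
    unfolding alg_isomorphic_def by blast
  then show ?thesis
    by (rule alg_isomorphic_sym)
qed

lemma independent_list_rank_two: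
  assumes "independent_list [br a b, br a c]"
  shows "independent_list [b, c, a, br a b, br a c]"
proof -
  have "br a c \<noteq> 0" "br a b \<notin> span {br a c}"
    using assms by (simp_all add: independent_list_Cons)
  then have "br a b \<noteq> 0"
    using span_zero by auto
  have "independent_list [a, br a b, br a c]"
    by (rule independent_list_ConsI[OF assms linear_bracket[of b]])
      (use \<open>br a b \<noteq> 0\<close> in \<open>simp add: bracket_anticomm[of b a]\<close>)
  then have "independent_list [c, a, br a b, br a c]"
    by (rule independent_list_ConsI[OF _ linear_bracket[of a]]) (use \<open>br a c \<noteq> 0\<close> in simp)
  then show ?thesis
    by (rule independent_list_ConsI[OF _ linear_bracket[of a]])
      (use \<open>br a b \<notin> span {br a c}\<close> in \<open>simp add: insert_commute[of "br a c" 0]\<close>)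
qed

lemma bracket_in_span_if_rank_two:
  assumes rank_two: "independent_list [br a b, br a c]"
  obtains \<gamma> \<epsilon> where "br b c = \<gamma> *s br a b + \<epsilon> *s br a c"
proof -
  \<comment> \<open>Bracketing with a and then with b kills the other coordinates of [b,c].\<close>
  have "br a b \<noteq> 0"
    using rank_two span_zero by (auto simp: independent_list_Cons)
  have "length [b, c, a, br a b, br a c] = dim UNIV"
    using card_Basis by simp
  then obtain cs where "length cs = length [b, c, a, br a b, br a c]"
      "br b c = lin_comb cs [b, c, a, br a b, br a c]"
    using independent_list_spans[OF independent_list_rank_two[OF rank_two]] by blast
  then obtain \<beta> \<delta> \<alpha> \<gamma> \<epsilon> where
    bc: "br b c = \<beta> *s b + (\<delta> *s c + (\<alpha> *s a + (\<gamma> *s br a b + \<epsilon> *s br a c)))"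
    by (auto simp: length_Suc_conv)
  have "lin_comb [\<beta>, \<delta>] [br a b, br a c] = br a (br b c)"
    by (simp add: bc bracket_simps)
  then have "\<beta> = 0" "\<delta> = 0"
    using independent_listD[OF rank_two, of "[\<beta>, \<delta>]"] by simp_all
  have "\<alpha> *s br b a = br b (br b c)"
    by (simp add: bc bracket_simps \<open>\<beta> = 0\<close> \<open>\<delta> = 0\<close>)
  then have "\<alpha> = 0"
    using \<open>br a b \<noteq> 0\<close> by (simp add: bracket_anticomm[of b a])
  then show thesis
    using that bc \<open>\<beta> = 0\<close> \<open>\<delta> = 0\<close> by simp
qed

lemma alg_isomorphic_L52_if_rank_two:
  assumes rank_two: "independent_list [br a b, br a c]"
  shows "alg_isomorphic scale br sc5 br_L52"
proof -
  obtain \<gamma> \<epsilon> where bc: "br b c = \<gamma> *s br a b + \<epsilon> *s br a c"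
    using bracket_in_span_if_rank_two[OF rank_two] .
  define b' where "b' = b - \<epsilon> *s a"
  define c' where "c' = c + \<gamma> *s a"
  have ab': "br a b' = br a b" and ac': "br a c' = br a c"
    by (simp_all add: b'_def c'_def bracket_simps)
  have b'c': "br b' c' = 0"
    by (simp add: b'_def c'_def bracket_simps bc bracket_anticomm[of b a] algebra_simps)
  have "independent_list [b', c', a, br a b, br a c]"
    using independent_list_rank_two[of a b' c'] rank_two by (simp add: ab' ac')
  then have basis: "independent_list [a, b', br a b, c', br a c]"
    by (rule independent_list_reorder) auto
  note brackets = ab' ac' b'c'
  show ?thesis
  proof (rule alg_isomorphic_sc5I[where f = "case_idx5 a b' (br a b) c' (br a c)"])
    show "independent_list (map (case_idx5 a b' (br a b) c' (br a c)) [E1, E2, E3, E4, E5])"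
      using basis by simp
    show "br (case_idx5 a b' (br a b) c' (br a c) i) (case_idx5 a b' (br a b) c' (br a c) j) =
        (\<Sum>k\<in>UNIV. br_L52 (indicator {i}) (indicator {j}) k *s case_idx5 a b' (br a b) c' (br a c) k)"
      for i j
      by (cases i; cases j)
        (simp_all add: sum_UNIV_idx5 br_L52_def indicator_def brackets brackets[THEN bracket_swap])
  qed (rule model_bracket_structure_constants)
qed

text \<open>If every ad a had rank at most 1, each [xi,yj] would lie on both lines spanned by
  [x1,x2] and [y1,y2], hence vanish, and x1, x2, y1, y2, [y1,y2], [x1,x2] would be
  independent.\<close>

lemma rank_two_if_independent_brackets:
  assumes "independent_list [br y1 y2, br x1 x2]"
  shows "\<exists>a b c. independent_list [br a b, br a c]"
proof (rule ccontr)
  assume "\<nexists>a b c. independent_list [br a b, br a c]"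
  then have rank_one: "br a c \<in> span {br a b}" if "br a b \<noteq> 0" for a b c
    using that by (auto simp: independent_list_Cons)
  have "br x1 x2 \<noteq> 0" and u_not_in_z: "br y1 y2 \<notin> span {br x1 x2}"
    using assms by (simp_all add: independent_list_Cons)
  then have "br y1 y2 \<noteq> 0"
    using span_zero by auto
  have in_z: "br x y \<in> span {br x1 x2}" if "x \<in> {x1, x2}" for x y
    using that rank_one[of x1 x2 y] rank_one[of x2 "- x1" y] \<open>br x1 x2 \<noteq> 0\<close>
    by (auto simp: bracket_minus_right bracket_anticomm[of x2 x1])
  have in_u: "br y x \<in> span {br y1 y2}" if "y \<in> {y1, y2}" for x y
    using that rank_one[of y1 y2 x] rank_one[of y2 "- y1" x] \<open>br y1 y2 \<noteq> 0\<close>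
    by (auto simp: bracket_minus_right bracket_anticomm[of y2 y1])
  have cross: "br x y = 0" if "x \<in> {x1, x2}" "y \<in> {y1, y2}" for x y
  proof (rule span_singletons_inter[OF u_not_in_z])
    show "br x y \<in> span {br x1 x2}"
      using in_z that(1) .
    show "br x y \<in> span {br y1 y2}"
      using span_neg[OF in_u[OF that(2), of x]] by (simp add: bracket_anticomm[of y x])
  qed
  have "independent_list [y2, br y1 y2, br x1 x2]"
    by (rule independent_list_ConsI[OF assms linear_bracket[of y1]])
      (use \<open>br y1 y2 \<noteq> 0\<close> in simp)
  then have "independent_list [y1, y2, br y1 y2, br x1 x2]"
    by (rule independent_list_ConsI[OF _ linear_bracket[of y2]])
      (use \<open>br y1 y2 \<noteq> 0\<close> in \<open>simp add: bracket_anticomm[of y2 y1]\<close>)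
  then have "independent_list [x2, y1, y2, br y1 y2, br x1 x2]"
    by (rule independent_list_ConsI[OF _ linear_bracket[of x1]])
      (use \<open>br x1 x2 \<noteq> 0\<close> cross in simp)
  then have "independent_list [x1, x2, y1, y2, br y1 y2, br x1 x2]"
    by (rule independent_list_ConsI[OF _ linear_bracket[of x2]])
      (use \<open>br x1 x2 \<noteq> 0\<close> cross in \<open>simp add: bracket_anticomm[of x2 x1]\<close>)
  then show False
    using independent_list_length_le_5 by fastforce
qed

lemma alg_isomorphic_abelian:
  assumes "\<And>x y. br x y = 0"
  shows "alg_isomorphic scale br sc5 br_abelian"
proof -
  obtain ws where "length ws = 5" "independent_list ws"
    using independent_list_extend_within[of "[]" UNIV] card_Basis by auto
  then obtain f1 f2 f3 f4 f5 where basis: "independent_list [f1, f2, f3, f4, f5]"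
    by (auto simp: numeral_eq_Suc length_Suc_conv)
  show ?thesis
  proof (rule alg_isomorphic_sc5I[where f = "case_idx5 f1 f2 f3 f4 f5"])
    show "independent_list (map (case_idx5 f1 f2 f3 f4 f5) [E1, E2, E3, E4, E5])"
      using basis by simp
    show "br (case_idx5 f1 f2 f3 f4 f5 i) (case_idx5 f1 f2 f3 f4 f5 j) =
        (\<Sum>k\<in>UNIV. br_abelian (indicator {i}) (indicator {j}) k *s case_idx5 f1 f2 f3 f4 f5 k)"
      for i j
      by (simp add: assms br_abelian_def)
  qed (rule model_bracket_structure_constants)
qed

lemma basis_centralizing_pair:
  assumes "br x1 x2 \<noteq> 0" and derived_line: "\<And>x y. br x y \<in> span {br x1 x2}"
  obtains w1 w2 where "independent_list [w1, w2, x1, x2, br x1 x2]"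
    and "br x1 w1 = 0" "br x2 w1 = 0" "br x1 w2 = 0" "br x2 w2 = 0"
proof -
  have "independent_list [x2, br x1 x2]"
    by (rule independent_list_ConsI[OF _ linear_bracket[of x1]])
      (use \<open>br x1 x2 \<noteq> 0\<close> in \<open>simp_all add: independent_list_Cons\<close>)
  then have "independent_list [x1, x2, br x1 x2]"
    by (rule independent_list_ConsI[OF _ linear_bracket[of x2]])
      (use \<open>br x1 x2 \<noteq> 0\<close> in \<open>simp add: bracket_anticomm[of x2 x1]\<close>)
  \<comment> \<open>The centralizer C of x1 and x2 is a complement of their span.\<close>
  moreover define C where "C = {w. br x1 w = 0 \<and> br x2 w = 0}"
  moreover have "\<exists>s\<in>C. v - s \<in> span (set [x1, x2, br x1 x2])" for v
  proof -
    obtain s r where "br x1 v = s *s br x1 x2" "br x2 v = r *s br x1 x2"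
      using derived_line[of x1 v] derived_line[of x2 v] by (auto simp: span_singleton)
    then have "v + r *s x1 - s *s x2 \<in> C"
      by (simp add: C_def bracket_simps bracket_anticomm[of x2 x1])
    moreover have "v - (v + r *s x1 - s *s x2) \<in> span (set [x1, x2, br x1 x2])"
      by (simp add: span_diff span_scale span_base)
    ultimately show ?thesis
      by blast
  qed
  ultimately obtain ws where "set ws \<subseteq> C" "length ws + 3 = 5"
      "independent_list (ws @ [x1, x2, br x1 x2])"
    using independent_list_extend_within[of "[x1, x2, br x1 x2]" C] card_Basis by auto
  then show thesis
    using that by (auto simp: numeral_eq_Suc length_Suc_conv C_def)
qed

lemma alg_isomorphic_H3K2I:
  assumes basis: "independent_list [w1, w2, x1, x2, br x1 x2]"
    and "br x1 w1 = 0" "br x2 w1 = 0" "br x1 w2 = 0" "br x2 w2 = 0" "br w1 w2 = 0"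
  shows "alg_isomorphic scale br sc5 br_H3K2"
proof (rule alg_isomorphic_sc5I[where f = "case_idx5 x1 x2 (br x1 x2) w1 w2"])
  have "independent_list [x1, x2, br x1 x2, w1, w2]"
    by (rule independent_list_reorder[OF basis]) auto
  then show "independent_list (map (case_idx5 x1 x2 (br x1 x2) w1 w2) [E1, E2, E3, E4, E5])"
    by simp
  note brackets = assms(2-6)
  show "br (case_idx5 x1 x2 (br x1 x2) w1 w2 i) (case_idx5 x1 x2 (br x1 x2) w1 w2 j) =
      (\<Sum>k\<in>UNIV. br_H3K2 (indicator {i}) (indicator {j}) k *s case_idx5 x1 x2 (br x1 x2) w1 w2 k)"
    for i j
    by (cases i; cases j)
      (simp_all add: sum_UNIV_idx5 br_H3K2_def indicator_def brackets brackets[THEN bracket_swap]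
        bracket_anticomm[of x2 x1])
qed (rule model_bracket_structure_constants)

lemma alg_isomorphic_H5I:
  assumes basis: "independent_list [w1, w2, x1, x2, br x1 x2]"
    and "br x1 w1 = 0" "br x2 w1 = 0" "br x1 w2 = 0" "br x2 w2 = 0"
    and "br w1 w2 = c *s br x1 x2" "c \<noteq> 0"
  shows "alg_isomorphic scale br sc5 br_H5"
proof -
  define w3 where "w3 = (1 / c) *s w1"
  have "independent_list [w3, w2, x1, x2, br x1 x2]"
    unfolding w3_def by (rule independent_list_Cons_scale[OF basis]) (use \<open>c \<noteq> 0\<close> in simp)
  then have "independent_list [x1, x2, w3, w2, br x1 x2]"
    by (rule independent_list_reorder) auto
  have "br x1 w3 = 0" "br x2 w3 = 0" "br w3 w2 = br x1 x2"
    using assms(2-7) by (simp_all add: w3_def bracket_simps)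
  note brackets = assms(4,5) this
  show ?thesis
  proof (rule alg_isomorphic_sc5I[where f = "case_idx5 x1 x2 w3 w2 (br x1 x2)"])
    show "independent_list (map (case_idx5 x1 x2 w3 w2 (br x1 x2)) [E1, E2, E3, E4, E5])"
      using \<open>independent_list [x1, x2, w3, w2, br x1 x2]\<close> by simp
    show "br (case_idx5 x1 x2 w3 w2 (br x1 x2) i) (case_idx5 x1 x2 w3 w2 (br x1 x2) j) =
        (\<Sum>k\<in>UNIV. br_H5 (indicator {i}) (indicator {j}) k *s case_idx5 x1 x2 w3 w2 (br x1 x2) k)"
      for i j
      by (cases i; cases j)
        (simp_all add: sum_UNIV_idx5 br_H5_def indicator_def brackets brackets[THEN bracket_swap]
          bracket_anticomm[of x2 x1])
  qed (rule model_bracket_structure_constants)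
qed

lemma alg_isomorphic_H3K2_or_H5:
  assumes "br x1 x2 \<noteq> 0" and derived_line: "\<And>x y. br x y \<in> span {br x1 x2}"
  shows "alg_isomorphic scale br sc5 br_H3K2 \<or> alg_isomorphic scale br sc5 br_H5"
proof -
  obtain w1 w2 where basis: "independent_list [w1, w2, x1, x2, br x1 x2]"
    and commute: "br x1 w1 = 0" "br x2 w1 = 0" "br x1 w2 = 0" "br x2 w2 = 0"
    using basis_centralizing_pair[OF assms] .
  obtain c where "br w1 w2 = c *s br x1 x2"
    using derived_line[of w1 w2] by (auto simp: span_singleton)
  then show ?thesis
    using alg_isomorphic_H3K2I[OF basis commute] alg_isomorphic_H5I[OF basis commute]
    by (cases "c = 0") auto
qed

theorem classification:
  "alg_isomorphic scale br sc5 br_abelian \<or> alg_isomorphic scale br sc5 br_H3K2 \<or>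
   alg_isomorphic scale br sc5 br_L52 \<or> alg_isomorphic scale br sc5 br_H5"
proof (cases "\<forall>x y. br x y = 0")
  case True
  then show ?thesis
    using alg_isomorphic_abelian by blast
next
  case False
  then obtain x1 x2 where "br x1 x2 \<noteq> 0"
    by blast
  show ?thesis
  proof (cases "\<forall>x y. br x y \<in> span {br x1 x2}")
    case True
    then show ?thesis
      using alg_isomorphic_H3K2_or_H5[OF \<open>br x1 x2 \<noteq> 0\<close>] by blast
  next
    case False
    then obtain y1 y2 where "independent_list [br y1 y2, br x1 x2]"
      using \<open>br x1 x2 \<noteq> 0\<close> by (auto simp: independent_list_Cons)
    then show ?thesis
      using rank_two_if_independent_brackets alg_isomorphic_L52_if_rank_two by blast
  qed
qed

end

theorem mainTheorem5:
  fixes sc :: "'k::field_char_0 \<Rightarrow> 'v::ab_group_add \<Rightarrow> 'v"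
    and br :: "'v \<Rightarrow> 'v \<Rightarrow> 'v"
  assumes "acaa_algebra sc br"
    and "vector_space.dim sc (UNIV :: 'v set) = 5"
  shows "alg_isomorphic sc br sc5 br_abelian \<or>
         alg_isomorphic sc br sc5 br_H3K2 \<or>
         alg_isomorphic sc br sc5 br_L52 \<or>
         alg_isomorphic sc br sc5 br_H5"
proof -
  interpret acaa sc br
    using assms(1) by (rule acaa_if_acaa_algebra)
  obtain B where "independent B" "UNIV \<subseteq> span B" "card B = 5"
    using basis_exists[of UNIV] assms(2) by metis
  then interpret acaa5 sc br B
    by unfold_locales (auto intro: card_ge_0_finite)
  show ?thesis
    by (rule classification)
qed

end
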